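(* Let $\mathcal{L}$ be a horizontal segment $EF$ of length $1$ in the plane, and let $\mathcal{R}$ be a rectangle with vertices $A,B,C,D$ in counterclockwise order, $|AB|=|CD|=\frac12$, $|BC|=|AD|=\frac14$, labelled so that, with $O_1$ the centre of $\mathcal{R}$, $A=O_1+\frac{\sqrt5}{8}(\cos\alpha,\sin\alpha)$ for some $\alpha\in[\theta_0,\theta_0+\pi)$, where $\theta_0=\arctan\frac12$. Then $\mu(\mathcal{L},\mathcal{R})\geq \frac{\sqrt5}{8}\sin\alpha$.
   Context: $\mu(K_1,\dots,K_n)$ denotes the area of the convex hull of $K_1\cup\dots\cup K_n$. (For any such rectangle exactly one labelling satisfying these conditions exists; then the vector $\overrightarrow{CA}$ has argument $\alpha$ and $\overrightarrow{CD}$ has argument $\alpha-\theta_0$.) *)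

theory Defs
  imports "HOL-Analysis.Analysis"
begin

text \<open>Points of the plane are complex numbers. \<mu>(K1,...,Kn) is the area (Lebesgue
measure) of the convex hull of the union.\<close>
definition mu :: "complex set list \<Rightarrow> real" where
  "mu Ks = measure lebesgue (convex hull (\<Union>(set Ks)))"

definition theta0 :: real where
  "theta0 = arctan (1/2)"

end

theory Submission
  imports Defs
begin

text \<open>By the labelling, the rectangle's diagonal from C to A is the vector
  (sqrt 5/4) cis \<alpha>, so its vertical extent is Im A - Im C = (sqrt 5/4) sin \<alpha>.
  The convex hull contains the triangles E F A and E F C; as EF is a horizontal
  unit segment they have areas |Im A - h|/2 and |Im C - h|/2 for the height h of EF.
  If h lies between Im C and Im A, the two triangles sit on opposite sides of
  the line of EF and their areas add up to (Im A - Im C)/2; otherwise the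
  farther of the two vertices alone gives a triangle of at least that area.\<close>

definition vec_of_complex :: "complex \<Rightarrow> real^2" where
  "vec_of_complex z = vector [Re z, Im z]"

definition complex_of_vec :: "real^2 \<Rightarrow> complex" where
  "complex_of_vec v = Complex (v$1) (v$2)"

lemma complex_of_vec_of_complex [simp]: "complex_of_vec (vec_of_complex z) = z"
  by (simp add: complex_of_vec_def vec_of_complex_def complex_eq_iff)

lemma vec_of_complex_of_vec [simp]: "vec_of_complex (complex_of_vec v) = v"
  by (simp add: complex_of_vec_def vec_of_complex_def vec_eq_iff forall_2)

lemma linear_vec_of_complex: "linear vec_of_complex"
  by (rule linearI) (auto simp: vec_of_complex_def vec_eq_iff forall_2)

lemma Basis_real2: "(Basis :: (real^2) set) = {axis 1 1, axis 2 1}"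
  apply (auto simp: Basis_vec_def)
  subgoal for i using exhaust_2[of i] by auto
  done

lemma borel_measurable_complex_of_vec [measurable]: "complex_of_vec \<in> borel_measurable borel"
  unfolding complex_of_vec_def by (intro borel_measurable_continuous_onI continuous_intros)

lemma distr_lborel_complex_of_vec: "distr lborel borel complex_of_vec = lborel"
proof (rule lborel_eqI[symmetric])
  fix l u :: complex
  assume "\<And>b. b \<in> Basis \<Longrightarrow> l \<bullet> b \<le> u \<bullet> b"
  from this[of 1] this[of \<i>] have le: "Re l \<le> Re u" "Im l \<le> Im u"
    by (auto simp: Basis_complex_def)
  have "complex_of_vec -` box l u = box (vec_of_complex l) (vec_of_complex u)"
    by (auto simp: box_def complex_of_vec_def vec_of_complex_def Basis_real2
        Basis_complex_def inner_axis)
  then have "emeasure (distr lborel borel complex_of_vec) (box l u)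
      = emeasure lborel (box (vec_of_complex l) (vec_of_complex u))"
    by (subst emeasure_distr) auto
  also have "\<dots> = (\<Prod>b\<in>Basis. (vec_of_complex u - vec_of_complex l) \<bullet> b)"
    using le by (intro emeasure_lborel_box) (auto simp: Basis_real2 vec_of_complex_def inner_axis)
  also have "\<dots> = (\<Prod>b\<in>Basis. (u - l) \<bullet> b)"
    by (simp add: Basis_real2 Basis_complex_def vec_of_complex_def inner_axis axis_eq_axis)
  finally show "emeasure (distr lborel borel complex_of_vec) (box l u) = (\<Prod>b\<in>Basis. (u - l) \<bullet> b)" .
qed simp

lemma measure_vec_of_complex_image:
  assumes "S \<in> sets borel"
  shows "measure lebesgue (vec_of_complex ` S) = measure lebesgue S"
proof -
  have preimage: "vec_of_complex ` S = complex_of_vec -` S"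
    by (auto simp: image_iff) (metis vec_of_complex_of_vec)
  have "measure lebesgue S = measure (distr lborel borel complex_of_vec) S"
    using assms by (simp add: distr_lborel_complex_of_vec)
  also have "\<dots> = measure lborel (complex_of_vec -` S)"
    using assms by (subst measure_distr) auto
  finally show ?thesis
    using measurable_sets[OF borel_measurable_complex_of_vec assms] by (simp add: preimage)
qed

lemma measure_triangle_complex:
  fixes a b c :: complex
  shows "measure lebesgue (convex hull {a, b, c}) = \<bar>Im (cnj (b - a) * (c - a))\<bar> / 2"
proof -
  let ?T = "convex hull {vec_of_complex a, vec_of_complex b, vec_of_complex c}"
  have "convex hull {a, b, c} \<in> sets borel"
    by (intro borel_closed compact_imp_closed finite_imp_compact_convex_hull) auto
  from measure_vec_of_complex_image[OF this]
  have "measure lebesgue (convex hull {a, b, c}) = measure lebesgue ?T"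
    by (simp add: convex_hull_linear_image[OF linear_vec_of_complex])
  also have "\<dots> = Henstock_Kurzweil_Integration.content ?T"
    by (intro measure_completion)
      (auto intro!: borel_closed compact_imp_closed finite_imp_compact_convex_hull)
  also have "\<dots> = \<bar>Im (cnj (b - a) * (c - a))\<bar> / 2"
    by (simp add: content_triangle vec_of_complex_def abs_minus_commute algebra_simps)
  finally show ?thesis .
qed

lemma measure_triangle_horizontal_base:
  assumes "Im a = Im b"
  shows "measure lebesgue (convex hull {a, b, c}) = cmod (b - a) * \<bar>Im c - Im a\<bar> / 2"
proof -
  have "cmod (b - a) = \<bar>Re b - Re a\<bar>"
    using assms by (simp add: cmod_def)
  then show ?thesis
    using assms by (simp add: measure_triangle_complex abs_mult)
qed

lemma convex_hull_Im_ge: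
  assumes "\<And>z. z \<in> S \<Longrightarrow> h \<le> Im z" "z \<in> convex hull S"
  shows "h \<le> Im z"
proof -
  have "convex hull S \<subseteq> {z. h \<le> \<i> \<bullet> z}"
    using assms(1) by (intro hull_minimal convex_halfspace_ge) (auto simp: inner_complex_def)
  then show ?thesis
    using assms(2) by (auto simp: inner_complex_def)
qed

lemma convex_hull_Im_le:
  assumes "\<And>z. z \<in> S \<Longrightarrow> Im z \<le> h" "z \<in> convex hull S"
  shows "Im z \<le> h"
proof -
  have "convex hull S \<subseteq> {z. \<i> \<bullet> z \<le> h}"
    using assms(1) by (intro hull_minimal convex_halfspace_le) (auto simp: inner_complex_def)
  then show ?thesis
    using assms(2) by (auto simp: inner_complex_def)
qed

lemma lmeasurable_convex_hull_finite:
  fixes S :: "'a::euclidean_space set"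
  shows "finite S \<Longrightarrow> convex hull S \<in> lmeasurable"
  by (intro lmeasurable_compact finite_imp_compact_convex_hull)

lemma measure_two_triangles_opposite_sides:
  assumes "Im a = Im b" "Im y \<le> Im a" "Im a \<le> Im x"
  shows "measure lebesgue (convex hull {a, b, x} \<union> convex hull {a, b, y})
      = cmod (b - a) * (Im x - Im y) / 2"
proof -
  let ?T1 = "convex hull {a, b, x}" and ?T2 = "convex hull {a, b, y}"
  have "?T1 \<inter> ?T2 \<subseteq> {z. \<i> \<bullet> z = Im a}"
  proof
    fix z assume "z \<in> ?T1 \<inter> ?T2"
    then have "Im a \<le> Im z" "Im z \<le> Im a"
      using assms by (auto intro: convex_hull_Im_ge[of "{a, b, x}"] convex_hull_Im_le[of "{a, b, y}"])
    then show "z \<in> {z. \<i> \<bullet> z = Im a}"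
      by (simp add: inner_complex_def)
  qed
  then have "measure lebesgue (?T1 \<inter> ?T2) = 0"
    by (intro negligible_imp_measure0 negligible_subset[OF negligible_hyperplane[of \<i> "Im a"]]) auto
  then show ?thesis
    using measure_Un3[of ?T1 lebesgue ?T2] lmeasurable_convex_hull_finite[of "{a, b, x}"]
      lmeasurable_convex_hull_finite[of "{a, b, y}"] assms
    by (simp add: measure_triangle_horizontal_base field_simps)
qed

lemma measure_convex_ge_horizontal_segment_height:
  assumes K: "convex K" "K \<in> lmeasurable" and sub: "{a, b, x, y} \<subseteq> K"
    and horizontal: "Im a = Im b"
  shows "cmod (b - a) * (Im x - Im y) / 2 \<le> measure lebesgue K"
proof -
  have triangle_sub: "convex hull {a, b, z} \<subseteq> K" if "z \<in> {x, y}" for z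
    using sub that K(1) by (intro hull_minimal) auto
  have triangle_le: "cmod (b - a) * \<bar>Im z - Im a\<bar> / 2 \<le> measure lebesgue K" if "z \<in> {x, y}" for z
    using measure_mono_fmeasurable[OF triangle_sub[OF that] _ K(2)] horizontal
    by (simp add: measure_triangle_horizontal_base lmeasurable_convex_hull_finite fmeasurableD)
  consider "Im a \<le> Im y" | "Im x \<le> Im a" | "Im y \<le> Im a" "Im a \<le> Im x"
    by linarith
  then show ?thesis
  proof cases
    case 1
    then have "cmod (b - a) * (Im x - Im y) \<le> cmod (b - a) * \<bar>Im x - Im a\<bar>"
      by (intro mult_left_mono) auto
    then show ?thesis
      using triangle_le[of x] by simp
  next
    case 2
    then have "cmod (b - a) * (Im x - Im y) \<le> cmod (b - a) * \<bar>Im y - Im a\<bar>"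
      by (intro mult_left_mono) auto
    then show ?thesis
      using triangle_le[of y] by simp
  next
    case 3
    have "convex hull {a, b, x} \<union> convex hull {a, b, y} \<subseteq> K"
      using triangle_sub by blast
    then show ?thesis
      using measure_mono_fmeasurable[OF _ _ K(2)] horizontal 3
        lmeasurable_convex_hull_finite[of "{a, b, x}"] lmeasurable_convex_hull_finite[of "{a, b, y}"]
      by (simp add: measure_two_triangles_opposite_sides[symmetric] fmeasurableD)
  qed
qed

theorem mainTheorem5:
  fixes E F A B C D :: complex and \<alpha> :: real
  assumes horiz: "Im E = Im F"
    and lenL: "cmod (F - E) = 1"
    and AB: "cmod (B - A) = 1/2"
    and BC: "C - B = \<i> * (B - A) / 2"
    and AD: "D - A = C - B"
    and labA: "A = (A + C) / 2 + complex_of_real (sqrt 5 / 8) * cis \<alpha>"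
    and alpha: "theta0 \<le> \<alpha>" "\<alpha> < theta0 + pi"
  shows "mu [closed_segment E F, convex hull {A, B, C, D}] \<ge> sqrt 5 / 8 * sin \<alpha>"
proof -
  define K where "K = convex hull (closed_segment E F \<union> convex hull {A, B, C, D})"
  have "K \<in> lmeasurable"
    unfolding K_def
    by (intro lmeasurable_compact compact_convex_hull compact_Un compact_segment
        finite_imp_compact_convex_hull) auto
  moreover have "{E, F, A, C} \<subseteq> K"
    unfolding K_def by (auto intro: hull_inc)
  ultimately have "cmod (F - E) * (Im A - Im C) / 2 \<le> measure lebesgue K"
    using horiz by (intro measure_convex_ge_horizontal_segment_height) (auto simp: K_def)
  moreover have "Im A - Im C = sqrt 5 / 4 * sin \<alpha>"
    using arg_cong[OF labA, of Im] by (simp add: field_simps)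
  ultimately show ?thesis
    using lenL by (simp add: mu_def K_def)
qed

end
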